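(* Let $N\ge 2$ agents have true utility functions $F_1,\dots,F_N:\mathbb{R}\to\mathbb{R}$. Let $\boldsymbol{u}^*=(u_1^*,\dots,u_N^* )$ be the optimal solution, assumed unique, of $\max_{\boldsymbol u}\sum_{i}F_i(u_i)$ subject to $\sum_i u_i=0$, and for each $i$ let $\boldsymbol{u}^{(i)}=(u^{(i)}_j)_{j\neq i}$ be the unique optimal solution of $\max\sum_{j\neq i}F_j(u_j)$ subject to $\sum_{j\ne i}u_j=0$. Let $H_i:=\sum_{j\neq i}F_j(u^{(i)}_j)$, $H_{max}:=\max_i H_i$ and $F_{total}:=\sum_j F_j(u_j^* )$. If $F_{total}>0$, $H_i>0$ for all $i$, and the Market Power Balance condition $(N-1)H_{max}\le\sum_i H_i$ holds, then there exist real numbers $\underline c\le\bar c$ such that for every constant $c\in[\underline c,\bar c]$ the Scaled VCG mechanism with scaling factor $c$ satisfies incentive compatibility, efficiency, budget balance and individual rationality simultaneously.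
   Context: Setting: an operator (ISO) wants to choose energy amounts $u_i$ ($u_i\le 0$ for producers, $u_i\ge0$ for consumers) maximizing the social welfare $\sum_i F_i(u_i)$ subject to $\sum_i u_i=0$, but does not know the $F_i$. Each agent $i$ bids a function $\hat F_i$ (not necessarily equal to $F_i$); write $\hat F=(\hat F_1,\dots,\hat F_N)$. The ISO computes $\boldsymbol u^*(\hat F)$ maximizing $\sum_i\hat F_i(u_i)$ subject to $\sum_iu_i=0$, assigns $u_i^*(\hat F)$ to agent $i$, and for each $i$ computes $\boldsymbol u^{(i)}(\hat F)$ maximizing $\sum_{j\ne i}\hat F_j(u_j)$ subject to $\sum_{j\ne i}u_j=0$. In the Scaled VCG (SVCG) mechanism with constant scaling factor $c$ (fixed in advance, independent of the bids), agent $i$ pays $p_i(\hat F)=c\sum_{j\ne i}\hat F_j(u_j^{(i)}(\hat F))-\sum_{j\neq i}\hat F_j(u_j^*(\hat F))$. Agent $i$'s net utility is $F_i(u_i^*(\hat F))-p_i(\hat F)$. Incentive compatibility (IC): for every $i$ and every bids of the other agents, bidding $\hat F_i=F_i$ maximizes agent $i$'s net utility. Efficiency (EF): under truthful bids the allocation maximizes $\sum_iF_i(u_i)$ subject to $\sum_iu_i=0$. Budget balance (BB): under truthful bids $\sum_i p_i\ge 0$. Individual rationality (IR): under truthful bids $F_i(u_i^* )-p_i\ge0$ for every $i$. *)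

theory Defs
  imports Complex_Main
begin

text \<open>Agents are indexed by natural numbers in a finite set A (in the theorem A = {..<N}).\<close>

definition welfare :: "(nat \<Rightarrow> real \<Rightarrow> real) \<Rightarrow> nat set \<Rightarrow> (nat \<Rightarrow> real) \<Rightarrow> real" where
  "welfare F A u = (\<Sum>j\<in>A. F j (u j))"

definition is_opt :: "(nat \<Rightarrow> real \<Rightarrow> real) \<Rightarrow> nat set \<Rightarrow> (nat \<Rightarrow> real) \<Rightarrow> bool" where
  "is_opt F A u \<longleftrightarrow> (\<Sum>j\<in>A. u j) = 0 \<and>
     (\<forall>v. (\<Sum>j\<in>A. v j) = 0 \<longrightarrow> welfare F A v \<le> welfare F A u)"

definition has_opt :: "(nat \<Rightarrow> real \<Rightarrow> real) \<Rightarrow> nat set \<Rightarrow> bool" where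
  "has_opt F A \<longleftrightarrow> (\<exists>u. is_opt F A u)"

definition unique_opt :: "(nat \<Rightarrow> real \<Rightarrow> real) \<Rightarrow> nat set \<Rightarrow> bool" where
  "unique_opt F A \<longleftrightarrow> (\<forall>u v. is_opt F A u \<longrightarrow> is_opt F A v \<longrightarrow> (\<forall>j\<in>A. u j = v j))"

definition alloc :: "(nat \<Rightarrow> real \<Rightarrow> real) \<Rightarrow> nat set \<Rightarrow> (nat \<Rightarrow> real)" where
  "alloc Fh A = (SOME u. is_opt Fh A u)"

definition svcg_pay :: "real \<Rightarrow> (nat \<Rightarrow> real \<Rightarrow> real) \<Rightarrow> nat set \<Rightarrow> nat \<Rightarrow> real" where
  "svcg_pay c Fh A i =
     c * welfare Fh (A - {i}) (alloc Fh (A - {i})) - welfare Fh (A - {i}) (alloc Fh A)"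

definition net_util :: "real \<Rightarrow> (nat \<Rightarrow> real \<Rightarrow> real) \<Rightarrow> (nat \<Rightarrow> real \<Rightarrow> real) \<Rightarrow> nat set \<Rightarrow> nat \<Rightarrow> real" where
  "net_util c F Fh A i = F i (alloc Fh A i) - svcg_pay c Fh A i"

text \<open>Incentive compatibility: for every agent i and every bid profile Fh (whose components
  j <> i are the other agents' bids and Fh i is an arbitrary bid of i), bidding the true F i
  is at least as good as bidding Fh i. The mechanism is only well defined when the
  welfare problem for the submitted bids has an optimal solution, so we quantify over such
  bid profiles.\<close>
definition svcg_IC :: "real \<Rightarrow> (nat \<Rightarrow> real \<Rightarrow> real) \<Rightarrow> nat set \<Rightarrow> bool" where
  "svcg_IC c F A \<longleftrightarrow> (\<forall>i\<in>A. \<forall>Fh. has_opt (Fh(i := F i)) A \<longrightarrow> has_opt Fh A \<longrightarrow>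
       net_util c F Fh A i \<le> net_util c F (Fh(i := F i)) A i)"

definition svcg_EF :: "(nat \<Rightarrow> real \<Rightarrow> real) \<Rightarrow> nat set \<Rightarrow> bool" where
  "svcg_EF F A \<longleftrightarrow> is_opt F A (alloc F A)"

definition svcg_BB :: "real \<Rightarrow> (nat \<Rightarrow> real \<Rightarrow> real) \<Rightarrow> nat set \<Rightarrow> bool" where
  "svcg_BB c F A \<longleftrightarrow> (\<Sum>i\<in>A. svcg_pay c F A i) \<ge> 0"

definition svcg_IR :: "real \<Rightarrow> (nat \<Rightarrow> real \<Rightarrow> real) \<Rightarrow> nat set \<Rightarrow> bool" where
  "svcg_IR c F A \<longleftrightarrow> (\<forall>i\<in>A. net_util c F F A i \<ge> 0)"

end

theory Submission
  imports Defs
begin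

text \<open>The Clarke-type term c * H_i of the payment does not depend on agent i's bid, so truthful
  bidding makes agent i maximise the bid welfare F_i(u_i) + sum_{j<>i} Fh_j(u_j), which the ISO
  maximises anyway: incentive compatibility holds for every c. Under truthful bids agent i pays
  c H_i - (F_total - F_i(u_i^*)), so individual rationality means c H_i <= F_total for all i, i.e.
  c <= F_total / H_max, and budget balance means c * sum_i H_i >= (N - 1) F_total. Market Power
  Balance is exactly the condition that the interval cut out by these two bounds is nonempty.\<close>

lemma is_opt_alloc: "is_opt F A u \<Longrightarrow> is_opt F A (alloc F A)"
  unfolding alloc_def by (metis someI)

lemma is_opt_welfare_eq: "is_opt F A u \<Longrightarrow> is_opt F A v \<Longrightarrow> welfare F A u = welfare F A v"
  unfolding is_opt_def by (meson order_antisym)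

lemma welfare_remove:
  "finite A \<Longrightarrow> i \<in> A \<Longrightarrow> welfare F A u = F i (u i) + welfare F (A - {i}) u"
  unfolding welfare_def by (simp add: sum.remove)

lemma welfare_fun_upd_notin: "i \<notin> A \<Longrightarrow> welfare (F(i := G)) A = welfare F A"
  unfolding welfare_def by (intro ext sum.cong) auto

lemma alloc_fun_upd_notin: "i \<notin> A \<Longrightarrow> alloc (F(i := G)) A = alloc F A"
  unfolding alloc_def is_opt_def by (simp add: welfare_fun_upd_notin)

lemma svcg_IC_any_scaling:
  assumes "finite A"
  shows "svcg_IC c F A"
  unfolding svcg_IC_def
proof (intro ballI allI impI)
  fix i Fh assume i: "i \<in> A" and "has_opt (Fh(i := F i)) A" and "has_opt Fh A"
  let ?G = "Fh(i := F i)"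
  have "is_opt ?G A (alloc ?G A)" "is_opt Fh A (alloc Fh A)"
    using \<open>has_opt ?G A\<close> \<open>has_opt Fh A\<close> is_opt_alloc unfolding has_opt_def by blast+
  then have "welfare ?G A (alloc Fh A) \<le> welfare ?G A (alloc ?G A)"
    unfolding is_opt_def by blast
  moreover have "i \<notin> A - {i}" by simp
  ultimately show "net_util c F Fh A i \<le> net_util c F ?G A i"
    using welfare_remove[OF assms i, of ?G]
    unfolding net_util_def svcg_pay_def by (simp add: welfare_fun_upd_notin alloc_fun_upd_notin)
qed

locale optimal_allocations =
  fixes F :: "nat \<Rightarrow> real \<Rightarrow> real" and A :: "nat set" and u :: "nat \<Rightarrow> real"
    and v :: "nat \<Rightarrow> nat \<Rightarrow> real"
  assumes fin: "finite A" and opt: "is_opt F A u"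
    and opt_remove: "\<And>i. i \<in> A \<Longrightarrow> is_opt F (A - {i}) (v i)"
begin

lemma svcg_pay_truthful:
  assumes "i \<in> A"
  shows "svcg_pay c F A i =
           c * welfare F (A - {i}) (v i) - (welfare F A u - F i (alloc F A i))"
proof -
  have "welfare F (A - {i}) (alloc F (A - {i})) = welfare F (A - {i}) (v i)"
    using is_opt_alloc is_opt_welfare_eq opt_remove[OF assms] by blast
  moreover have "welfare F A u = welfare F A (alloc F A)"
    using is_opt_alloc is_opt_welfare_eq opt by blast
  ultimately show ?thesis
    unfolding svcg_pay_def using welfare_remove[OF fin assms, where u="alloc F A"] by simp
qed

lemma svcg_IR_iff: "svcg_IR c F A \<longleftrightarrow> (\<forall>i\<in>A. c * welfare F (A - {i}) (v i) \<le> welfare F A u)"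
  unfolding svcg_IR_def net_util_def by (simp add: svcg_pay_truthful)

lemma svcg_BB_iff:
  "svcg_BB c F A \<longleftrightarrow> (real (card A) - 1) * welfare F A u \<le> c * (\<Sum>i\<in>A. welfare F (A - {i}) (v i))"
proof -
  have "welfare F A u = (\<Sum>i\<in>A. F i (alloc F A i))"
    using is_opt_alloc is_opt_welfare_eq opt unfolding welfare_def by blast
  then have "(\<Sum>i\<in>A. svcg_pay c F A i) =
               c * (\<Sum>i\<in>A. welfare F (A - {i}) (v i)) - (real (card A) - 1) * welfare F A u"
    by (simp add: svcg_pay_truthful sum_subtractf sum_distrib_left sum.distrib algebra_simps)
  then show ?thesis unfolding svcg_BB_def by simp
qed

end

lemma MPB_scaling_interval:
  fixes H :: "nat \<Rightarrow> real" and W :: real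
  assumes fin: "finite A" and "A \<noteq> {}" and "W > 0" and Hpos: "\<forall>i\<in>A. H i > 0"
    and MPB: "(real (card A) - 1) * (MAX i\<in>A. H i) \<le> (\<Sum>i\<in>A. H i)"
  defines "c_lo \<equiv> (real (card A) - 1) * W / (\<Sum>i\<in>A. H i)" and "c_hi \<equiv> W / (MAX i\<in>A. H i)"
  shows "c_lo \<le> c_hi"
    and "\<And>c. c \<in> {c_lo..c_hi} \<Longrightarrow> (real (card A) - 1) * W \<le> c * (\<Sum>i\<in>A. H i)"
    and "\<And>c i. c \<in> {c_lo..c_hi} \<Longrightarrow> i \<in> A \<Longrightarrow> c * H i \<le> W"
proof -
  have Hmax: "H i \<le> (MAX i\<in>A. H i)" if "i \<in> A" for i
    using fin that by simp
  obtain k where "k \<in> A" using \<open>A \<noteq> {}\<close> by blast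
  then have Hm_pos: "(MAX i\<in>A. H i) > 0" using Hmax Hpos by (meson less_le_trans)
  have Hs_pos: "(\<Sum>i\<in>A. H i) > 0" using fin \<open>A \<noteq> {}\<close> Hpos by (simp add: sum_pos)
  have "card A \<ge> 1" using fin \<open>A \<noteq> {}\<close> by (simp add: Suc_leI card_gt_0_iff)
  then have c_lo_nonneg: "c_lo \<ge> 0" unfolding c_lo_def using \<open>W > 0\<close> Hs_pos by simp
  show "c_lo \<le> c_hi"
    unfolding c_lo_def c_hi_def using MPB \<open>W > 0\<close> Hm_pos Hs_pos
    by (simp add: divide_simps)
  show "(real (card A) - 1) * W \<le> c * (\<Sum>i\<in>A. H i)" if c: "c \<in> {c_lo..c_hi}" for c
    using c Hs_pos unfolding c_lo_def by (simp add: pos_divide_le_eq)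
  show "c * H i \<le> W" if c: "c \<in> {c_lo..c_hi}" and "i \<in> A" for c i
  proof -
    have "c * H i \<le> c * (MAX i\<in>A. H i)"
      using c c_lo_nonneg Hmax[OF \<open>i \<in> A\<close>] by (simp add: mult_left_mono)
    also have "\<dots> \<le> W" using c Hm_pos unfolding c_hi_def by (simp add: pos_le_divide_eq)
    finally show ?thesis .
  qed
qed

theorem theorem1:
  fixes N :: nat and F :: "nat \<Rightarrow> real \<Rightarrow> real"
    and ustar :: "nat \<Rightarrow> real" and uminus :: "nat \<Rightarrow> nat \<Rightarrow> real"
  assumes N2: "N \<ge> 2"
    and opt: "is_opt F {..<N} ustar" and uniq: "unique_opt F {..<N}"
    and opt_i: "\<And>i. i < N \<Longrightarrow> is_opt F ({..<N} - {i}) (uminus i)"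
    and uniq_i: "\<And>i. i < N \<Longrightarrow> unique_opt F ({..<N} - {i})"
    and Ftot: "(\<Sum>j<N. F j (ustar j)) > 0"
    and Hpos: "\<And>i. i < N \<Longrightarrow> (\<Sum>j\<in>{..<N} - {i}. F j (uminus i j)) > 0"
    and MPB: "real (N - 1) * (MAX i\<in>{..<N}. (\<Sum>j\<in>{..<N} - {i}. F j (uminus i j)))
              \<le> (\<Sum>i<N. (\<Sum>j\<in>{..<N} - {i}. F j (uminus i j)))"
  shows "\<exists>c_lo c_hi :: real. c_lo \<le> c_hi \<and>
           (\<forall>c\<in>{c_lo..c_hi}. svcg_IC c F {..<N} \<and> svcg_EF F {..<N} \<and>
                               svcg_BB c F {..<N} \<and> svcg_IR c F {..<N})"
proof -
  let ?A = "{..<N}" and ?W = "\<Sum>j<N. F j (ustar j)"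
  let ?H = "\<lambda>i. \<Sum>j\<in>{..<N} - {i}. F j (uminus i j)"
  have fin: "finite ?A" and ne: "?A \<noteq> {}" using N2 by (auto simp: lessThan_empty_iff)
  have Hpos': "\<forall>i\<in>?A. ?H i > 0" using Hpos by simp
  have MPB': "(real (card ?A) - 1) * (MAX i\<in>?A. ?H i) \<le> (\<Sum>i\<in>?A. ?H i)"
    using MPB N2 by (simp add: of_nat_diff)
  interpret optimal_allocations F ?A ustar uminus
    using opt opt_i by unfold_locales auto
  define c_lo where "c_lo = (real (card ?A) - 1) * ?W / (\<Sum>i\<in>?A. ?H i)"
  define c_hi where "c_hi = ?W / (MAX i\<in>?A. ?H i)"
  note interval = MPB_scaling_interval[of ?A ?W ?H, OF fin ne Ftot Hpos' MPB',
      folded c_lo_def c_hi_def]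
  show ?thesis
  proof (rule exI[of _ c_lo], rule exI[of _ c_hi], intro conjI ballI)
    show "c_lo \<le> c_hi" by (rule interval(1))
    fix c assume c: "c \<in> {c_lo..c_hi}"
    show "svcg_BB c F ?A"
      unfolding svcg_BB_iff welfare_def using interval(2)[OF c] by simp
    show "svcg_IR c F ?A"
      unfolding svcg_IR_iff welfare_def using interval(3)[OF c] by simp
    show "svcg_IC c F ?A" using svcg_IC_any_scaling[OF fin] .
    show "svcg_EF F ?A" unfolding svcg_EF_def using is_opt_alloc[OF opt] .
  qed
qed

end
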